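(* Let $n\ge 2$ be a power of two, $\ell\ge1$ an integer, and $N$ a positive integer multiple of $2n$. Then the distribution $\mathbf{D}_{n,\ell}$ can be sampled exactly by a sampler making two adaptive probes (per output bit) to independent uniform symbols from $[N]$.
   Context: Distribution $\mathbf{D}_{n,\ell}$: for $n\ge2$ a power of two and integer $\ell\ge1$, $\mathbf{D}_{n,\ell}$ is the distribution over $(\mathbf{i}^{(1)},\dots,\mathbf{i}^{(\ell)},\mathbf{x},\mathbf{y}^{(1)},\dots,\mathbf{y}^{(\ell)})\in\{0,1\}^{\ell\log n+(\ell+1)n}$ where each $\mathbf{i}^{(j)}$ is independently uniform on $\{0,1\}^{\log n}$ (identified with an element of $[n]$, equivalently of $\mathbb{Z}_n$, via a fixed bijection), $\mathbf{x}$ is uniform on $\{0,1\}^n$ independent of the shifts, and $\mathbf{y}^{(j)}_k=\mathbf{x}_{k+\mathbf{i}^{(j)}\bmod n}$ for all $j\in[\ell]$, $k\in[n]$ (indices of $\mathbf{x}$ taken modulo $n$). Logarithms are base 2. A sampler making two adaptive probes to independent uniform symbols from $[N]$ is given an arbitrarily long sequence $R_1,R_2,\dots$ of independent uniform elements of $[N]$; each output bit is computed by reading one symbol $R_a$ at a fixed position $a$ (depending only on the output index), then reading one symbol $R_b$ whose position $b$ may depend on the value of $R_a$, and outputting a function of the two read values; it samples $\mathbf{D}$ exactly if its output distribution equals $\mathbf{D}$. *)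

theory Defs
  imports "HOL-Probability.Probability"
begin

text \<open>Shifts and indices live in {0..<n} (= Z_n);
  enc is the fixed bijection from {0..<n} to bit strings of length log n.\<close>
definition D_dist :: "nat \<Rightarrow> nat \<Rightarrow> (nat \<Rightarrow> bool list) \<Rightarrow> bool list pmf" where
  "D_dist n l enc =
     pmf_of_set {is. length is = l \<and> set is \<subseteq> {0..<n}} \<bind> (\<lambda>is.
     pmf_of_set {xs :: bool list. length xs = n} \<bind> (\<lambda>x.
     return_pmf (concat (map enc is) @ x @
                 concat (map (\<lambda>i. map (\<lambda>k. x ! ((k + i) mod n)) [0..<n]) is))))"

text \<open>A two-adaptive-probe sampler with m output bits reading a sequence of L
  independent uniform symbols from [N] = {0..<N}: output bit t reads R ! (a t),
  then R ! (b t v) where v is the value just read, and outputs f t v w.\<close>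
definition two_probe_valid :: "nat \<Rightarrow> nat \<Rightarrow> nat \<Rightarrow> (nat \<Rightarrow> nat) \<Rightarrow> (nat \<Rightarrow> nat \<Rightarrow> nat) \<Rightarrow> bool" where
  "two_probe_valid N L m a b \<longleftrightarrow>
     (\<forall>t<m. a t < L \<and> (\<forall>v<N. b t v < L))"

definition two_probe_output :: "nat \<Rightarrow> nat \<Rightarrow> nat \<Rightarrow> (nat \<Rightarrow> nat) \<Rightarrow> (nat \<Rightarrow> nat \<Rightarrow> nat)
     \<Rightarrow> (nat \<Rightarrow> nat \<Rightarrow> nat \<Rightarrow> bool) \<Rightarrow> bool list pmf" where
  "two_probe_output N L m a b f =
     map_pmf (\<lambda>R. map (\<lambda>t. f t (R ! a t) (R ! b t (R ! a t))) [0..<m])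
             (pmf_of_set {R. length R = L \<and> set R \<subseteq> {0..<N}})"

end

theory Submission
  imports Defs
begin

text \<open>The sampler reads l + n symbols. The first l, reduced mod n, are the shifts i(j), and the
  parities of the last n are the bits of x; because n and 2 divide N, these are independent and
  uniform. A bit of some enc(i(j)) or of x is read off a single symbol, while y(j)_p, which is
  x_{(p + i(j)) mod n}, first probes the j-th symbol to learn the shift and then the symbol
  carrying the needed bit of x.\<close>

lemma pair_pmf_of_set:
  assumes "finite A" "A \<noteq> {}" "finite B" "B \<noteq> {}"
  shows "pair_pmf (pmf_of_set A) (pmf_of_set B) = pmf_of_set (A \<times> B)"
proof (rule pmf_eqI)
  fix z :: "'a \<times> 'b"
  show "pmf (pair_pmf (pmf_of_set A) (pmf_of_set B)) z = pmf (pmf_of_set (A \<times> B)) z"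
    using assms by (cases z) (simp add: pmf_pair card_cartesian_product indicator_def)
qed

lemma replicate_pmf_of_set:
  assumes "finite S" "S \<noteq> {}"
  shows "replicate_pmf n (pmf_of_set S)
           = pmf_of_set {xs. length xs = n \<and> set xs \<subseteq> S}"
proof (induction n)
  case 0
  have "{xs. length xs = 0 \<and> set xs \<subseteq> S} = {[]}" by auto
  then show ?case by (simp add: pmf_of_set_singleton)
next
  case (Suc n)
  let ?lists = "\<lambda>n. {xs. length xs = n \<and> set xs \<subseteq> S}"
  have fin: "finite (?lists n)"
    using finite_lists_length_eq[OF assms(1)] by (simp add: conj_commute)
  from assms(2) obtain s where "s \<in> S" by blast
  then have ne: "?lists n \<noteq> {}"
    by (auto intro!: exI[of _ "replicate n s"])
  have "replicate_pmf (Suc n) (pmf_of_set S)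
      = map_pmf (\<lambda>(x, xs). x # xs) (pair_pmf (pmf_of_set S) (pmf_of_set (?lists n)))"
    by (simp add: Suc pair_pmf_def map_bind_pmf)
  also have "\<dots> = pmf_of_set ((\<lambda>(x, xs). x # xs) ` (S \<times> ?lists n))"
    using assms fin ne by (simp add: pair_pmf_of_set map_pmf_of_set_inj inj_on_def)
  also have "(\<lambda>(x, xs). x # xs) ` (S \<times> ?lists n) = ?lists (Suc n)"
    by (auto simp: length_Suc_conv image_iff)
  finally show ?case .
qed

lemma map_replicate_pmf: "map_pmf (map f) (replicate_pmf n p) = replicate_pmf n (map_pmf f p)"
proof (induction n)
  case (Suc n)
  then show ?case by (simp add: map_bind_pmf bind_map_pmf flip: Suc.IH)
qed simp

lemma map_mod_pmf_of_set_atLeastLessThan: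
  assumes "(m::nat) dvd N" "N > 0"
  shows "map_pmf (\<lambda>v. v mod m) (pmf_of_set {0..<N}) = pmf_of_set {0..<m}"
proof -
  obtain q where N: "N = m * q" using assms(1) by blast
  with assms(2) have "m > 0" "q > 0" by auto
  have bound: "r + m * s < N" if "r < m" "s < q" for r s
  proof -
    have "r + m * s < m * Suc s" using that by simp
    also have "\<dots> \<le> N" unfolding N using that by (intro mult_le_mono2) simp
    finally show ?thesis .
  qed
  have "bij_betw (\<lambda>v. (v mod m, v div m)) {0..<N} ({0..<m} \<times> {0..<q})"
  proof (rule bij_betwI[where g = "\<lambda>(r, s). r + m * s"])
    show "(\<lambda>v. (v mod m, v div m)) \<in> {0..<N} \<rightarrow> {0..<m} \<times> {0..<q}"
      using \<open>m > 0\<close> by (auto simp: N div_less_iff_less_mult mult.commute)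
  qed (auto intro: bound)
  then have "map_pmf (\<lambda>v. (v mod m, v div m)) (pmf_of_set {0..<N})
      = pair_pmf (pmf_of_set {0..<m}) (pmf_of_set {0..<q})"
    using assms(2) \<open>m > 0\<close> \<open>q > 0\<close>
    by (simp add: map_pmf_of_set_bij_betw pair_pmf_of_set)
  then have "map_pmf fst (map_pmf (\<lambda>v. (v mod m, v div m)) (pmf_of_set {0..<N}))
      = pmf_of_set {0..<m}"
    by (simp add: map_fst_pair_pmf)
  then show ?thesis
    by (simp add: map_pmf_comp)
qed

lemma map_odd_pmf_of_set_atLeastLessThan:
  assumes "even (N::nat)" "N > 0"
  shows "map_pmf odd (pmf_of_set {0..<N}) = pmf_of_set (UNIV :: bool set)"
proof -
  have "bij_betw (\<lambda>r. r = 1) {0..<2::nat} UNIV"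
    by (rule bij_betwI[where g = "\<lambda>b. if b then 1 else 0"]) auto
  then have "map_pmf (\<lambda>r. r = 1) (map_pmf (\<lambda>v::nat. v mod 2) (pmf_of_set {0..<N}))
      = pmf_of_set UNIV"
    using assms by (simp add: map_mod_pmf_of_set_atLeastLessThan map_pmf_of_set_bij_betw)
  then show ?thesis
    by (simp add: map_pmf_comp odd_iff_mod_2_eq_one)
qed

lemma concat_map_const_length:
  assumes "\<forall>x\<in>set xs. length (g x) = k"
  shows "concat (map g xs) = map (\<lambda>t. g (xs ! (t div k)) ! (t mod k)) [0..<length xs * k]"
  using assms
proof (induction xs)
  case (Cons x xs)
  show ?case
  proof (cases "k = 0")
    case True
    with Cons.prems show ?thesis by simp
  next
    case False
    have "map (\<lambda>t. g ((x # xs) ! (t div k)) ! (t mod k)) [0..<k] = g x"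
      using Cons.prems by (intro nth_equalityI) auto
    moreover have "map (\<lambda>t. g ((x # xs) ! (t div k)) ! (t mod k)) [k..<k + length xs * k]
        = concat (map g xs)"
    proof -
      have "[k..<k + length xs * k] = map (\<lambda>i. i + k) [0..<length xs * k]"
        by (simp add: map_add_upt add.commute)
      then show ?thesis
        using Cons False by simp
    qed
    ultimately show ?thesis
      by (simp add: upt_add_eq_append[of 0 k])
  qed
qed simp

definition shift_outcome ::
    "(nat \<Rightarrow> bool list) \<Rightarrow> nat \<Rightarrow> nat list \<Rightarrow> bool list \<Rightarrow> bool list" where
  "shift_outcome enc n is x =
     concat (map enc is) @ x @
     concat (map (\<lambda>i. map (\<lambda>p. x ! ((p + i) mod n)) [0..<n]) is)"

definition shift_first_probe :: "nat \<Rightarrow> nat \<Rightarrow> nat \<Rightarrow> nat \<Rightarrow> nat" where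
  "shift_first_probe n k l t =
     (if t < l * k then t div k
      else if t < l * k + n then l + (t - l * k)
      else (t - l * k - n) div n)"

text \<open>Only the bits of the y(j) use the second probe; for the others it is just some valid
  index.\<close>

definition shift_second_probe :: "nat \<Rightarrow> nat \<Rightarrow> nat \<Rightarrow> nat \<Rightarrow> nat \<Rightarrow> nat" where
  "shift_second_probe n k l t v = l + (t - l * k - n + v) mod n"

definition shift_sampler_bit ::
    "(nat \<Rightarrow> bool list) \<Rightarrow> nat \<Rightarrow> nat \<Rightarrow> nat \<Rightarrow> nat \<Rightarrow> nat \<Rightarrow> nat \<Rightarrow> bool" where
  "shift_sampler_bit enc n k l t v w =
     (if t < l * k then enc (v mod n) ! (t mod k)
      else if t < l * k + n then odd v
      else odd w)"

lemma shift_sampler_output: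
  assumes A: "length A = l" and B: "length B = n" and "n > 0"
    and enc: "\<forall>i<n. length (enc i) = k"
  defines "R \<equiv> A @ B"
  shows "map (\<lambda>t. shift_sampler_bit enc n k l t (R ! shift_first_probe n k l t)
                   (R ! shift_second_probe n k l t (R ! shift_first_probe n k l t)))
             [0..<l * k + (l + 1) * n]
         = shift_outcome enc n (map (\<lambda>v. v mod n) A) (map odd B)"
    (is "map ?out _ = shift_outcome enc n ?is ?x")
proof -
  have shift: "[a..<a + c] = map (\<lambda>i. i + a) [0..<c]" for a c :: nat
    by (simp add: map_add_upt add.commute)
  have split: "[0..<l * k + (l + 1) * n]
      = [0..<l * k] @ [l * k..<l * k + n] @ [l * k + n..<l * k + n + l * n]"
  proof -
    have "l * k + (l + 1) * n = l * k + n + l * n" by simp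
    then show ?thesis by (simp only: upt_add_eq_append[of 0, OF le0] append_assoc)
  qed
  have "map ?out [0..<l * k] = map (\<lambda>t. enc (?is ! (t div k)) ! (t mod k)) [0..<length ?is * k]"
    using A
    by (auto simp: shift_first_probe_def shift_sampler_bit_def R_def nth_append
        less_mult_imp_div_less)
  also have "\<dots> = concat (map enc ?is)"
    using enc \<open>n > 0\<close> by (intro concat_map_const_length[symmetric]) auto
  finally have block1: "map ?out [0..<l * k] = concat (map enc ?is)" .
  have block2: "map ?out [l * k..<l * k + n] = ?x"
    using A B
    by (intro nth_equalityI) (auto simp: shift_first_probe_def shift_sampler_bit_def R_def nth_append)
  let ?g = "\<lambda>i. map (\<lambda>p. ?x ! ((p + i) mod n)) [0..<n]"
  have "map ?out [l * k + n..<l * k + n + l * n]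
      = map (\<lambda>s. ?g (?is ! (s div n)) ! (s mod n)) [0..<length ?is * n]"
    using A B \<open>n > 0\<close>
    by (auto simp: shift shift_first_probe_def shift_second_probe_def shift_sampler_bit_def R_def
        nth_append less_mult_imp_div_less mod_add_eq)
  also have "\<dots> = concat (map ?g ?is)"
    by (intro concat_map_const_length[symmetric]) auto
  finally have block3: "map ?out [l * k + n..<l * k + n + l * n] = concat (map ?g ?is)" .
  show ?thesis
    by (simp only: split map_append block1 block2 block3 shift_outcome_def)
qed

lemma two_probe_valid_shift_sampler:
  assumes "n > 0"
  shows "two_probe_valid N (l + n) (l * k + (l + 1) * n)
           (shift_first_probe n k l) (shift_second_probe n k l)"
  unfolding two_probe_valid_def
proof (intro allI impI conjI)
  fix t assume t: "t < l * k + (l + 1) * n"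
  have "t div k < l" if "t < l * k"
    using that by (rule less_mult_imp_div_less)
  moreover have "(t - l * k - n) div n < l" if "\<not> t < l * k + n"
    using t that by (intro less_mult_imp_div_less) (simp add: algebra_simps)
  ultimately show "shift_first_probe n k l t < l + n"
    by (auto simp: shift_first_probe_def)
  show "shift_second_probe n k l t v < l + n" for v
    using \<open>n > 0\<close> by (simp add: shift_second_probe_def)
qed

lemma two_probe_output_shift_sampler:
  assumes "n > 0" "N > 0" "n dvd N" "even N" and enc: "\<forall>i<n. length (enc i) = k"
  shows "two_probe_output N (l + n) (l * k + (l + 1) * n) (shift_first_probe n k l)
           (shift_second_probe n k l) (shift_sampler_bit enc n k l) = D_dist n l enc"
proof -
  let ?U = "pmf_of_set {0..<N}"
  let ?out = "\<lambda>R. map (\<lambda>t. shift_sampler_bit enc n k l t (R ! shift_first_probe n k l t)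
      (R ! shift_second_probe n k l t (R ! shift_first_probe n k l t)))
      [0..<l * k + (l + 1) * n]"
  have "two_probe_output N (l + n) (l * k + (l + 1) * n) (shift_first_probe n k l)
           (shift_second_probe n k l) (shift_sampler_bit enc n k l)
      = replicate_pmf l ?U \<bind>
          (\<lambda>A. replicate_pmf n ?U \<bind> (\<lambda>B. return_pmf (?out (A @ B))))"
    using \<open>N > 0\<close>
    by (simp add: two_probe_output_def replicate_pmf_of_set[symmetric] replicate_pmf_distrib
        map_bind_pmf)
  also have "\<dots> = replicate_pmf l ?U \<bind> (\<lambda>A. replicate_pmf n ?U \<bind>
      (\<lambda>B. return_pmf (shift_outcome enc n (map (\<lambda>v. v mod n) A) (map odd B))))"
  proof (intro bind_pmf_cong refl)
    fix A B assume "A \<in> set_pmf (replicate_pmf l ?U)" "B \<in> set_pmf (replicate_pmf n ?U)"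
    then have "length A = l" "length B = n"
      by (simp_all add: set_replicate_pmf)
    then have "?out (A @ B) = shift_outcome enc n (map (\<lambda>v. v mod n) A) (map odd B)"
      using \<open>n > 0\<close> enc by (rule shift_sampler_output)
    then show "return_pmf (?out (A @ B))
        = return_pmf (shift_outcome enc n (map (\<lambda>v. v mod n) A) (map odd B))"
      by simp
  qed
  also have "\<dots> = map_pmf (map (\<lambda>v. v mod n)) (replicate_pmf l ?U) \<bind>
      (\<lambda>is. map_pmf (map odd) (replicate_pmf n ?U) \<bind>
        (\<lambda>x. return_pmf (shift_outcome enc n is x)))"
    by (simp add: bind_map_pmf)
  also have "\<dots> = replicate_pmf l (pmf_of_set {0..<n}) \<bind>
      (\<lambda>is. replicate_pmf n (pmf_of_set UNIV) \<bind>
        (\<lambda>x. return_pmf (shift_outcome enc n is x)))"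
    using assms
    by (simp add: map_replicate_pmf map_mod_pmf_of_set_atLeastLessThan
        map_odd_pmf_of_set_atLeastLessThan)
  also have "\<dots> = D_dist n l enc"
    using \<open>n > 0\<close> by (simp add: replicate_pmf_of_set D_dist_def shift_outcome_def)
  finally show ?thesis .
qed

theorem claim2:
  fixes n l N k :: nat and enc :: "nat \<Rightarrow> bool list"
  assumes "n = 2 ^ k" and "k \<ge> 1" and "l \<ge> 1" and "N > 0" and "(2 * n) dvd N"
    and "bij_betw enc {0..<n} {xs. length xs = k}"
  shows "\<exists>L a b f. two_probe_valid N L (l * k + (l + 1) * n) a b \<and>
           two_probe_output N L (l * k + (l + 1) * n) a b f = D_dist n l enc"
proof -
  have "n > 0" using assms(1) by simp
  moreover have "n dvd N" "even N"
    using assms(5) by (auto intro: dvd_mult_left dvd_mult_right)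
  moreover have "\<forall>i<n. length (enc i) = k"
    using assms(6) by (auto simp: bij_betw_def)
  ultimately show ?thesis
    using assms(4) two_probe_valid_shift_sampler two_probe_output_shift_sampler by blast
qed

end
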